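(* Let $d=d_1+\dots+d_l$ and let $f:\mathbb{R}^d\to\mathbb{R}$ be differentiable with $f(x)\ge f^{\inf}$ for all $x$ (some $f^{\inf}\in\mathbb{R}$), and $f(x)\le f(y)+\langle\nabla f(y),x-y\rangle+\tfrac12\langle {\bf L}(x-y),x-y\rangle$ for all $x,y$, where ${\bf L}=\mathrm{Diag}({\bf L}_1,\dots,{\bf L}_l)$ with ${\bf L}_i\in\mathbb{S}^{d_i}_{++}$. For each $i\in[l]$ let $({\bf S}_i^k)_{k\ge0}$ be i.i.d. random matrices in $\mathbb{S}^{d_i}_+$ with $\mathbb{E}[{\bf S}_i^k]={\bf I}_{d_i}$, and set ${\bf S}^k:=\mathrm{Diag}({\bf S}_1^k,\dots,{\bf S}_l^k)$. Choose ${\bf W}_i\in\mathbb{S}^{d_i}_{++}$ and scalars $\gamma_i>0$ such that $$\gamma_i\le \lambda_{\max}^{-1}\Big(\mathbb{E}\big[{\bf W}_i^{-1/2}{\bf S}_i^k{\bf W}_i{\bf L}_i{\bf W}_i{\bf S}_i^k{\bf W}_i^{-1/2}\big]\Big)\qquad\forall i\in[l].$$ Let ${\bf W}:=\mathrm{Diag}({\bf W}_1,\dots,{\bf W}_l)$, $\Gamma:=\mathrm{Diag}(\gamma_1{\bf I}_{d_1},\dots,\gamma_l{\bf I}_{d_l})$, ${\bf D}:=\Gamma{\bf W}$, fix $x^0\in\mathbb{R}^d$ and let $x^{k+1}=x^k-{\bf D}{\bf S}^k\nabla f(x^k)$. Then for every $K\ge1$, $$\frac1K\sum_{k=0}^{K-1}\mathbb{E}\Big[\|\nabla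 f(x^k)\|^2_{\Gamma{\bf W}/\det(\Gamma{\bf W})^{1/d}}\Big]\le\frac{2(f(x^0)-f^{\inf})}{\det(\Gamma{\bf W})^{1/d}\,K}.$$
   Context: $\mathbb{S}^m_{+}$ (resp. $\mathbb{S}^m_{++}$): symmetric positive semidefinite (resp. definite) $m\times m$ matrices. $\mathrm{Diag}({\bf A}_1,\dots,{\bf A}_l)$ is the block-diagonal matrix with blocks ${\bf A}_i$. $\|x\|_{{\bf Q}}^2:=\langle{\bf Q}x,x\rangle$. $\lambda_{\max}$ denotes the largest eigenvalue. All expectations are assumed finite. *)

theory Defs
  imports "HOL-Probability.Probability"
begin

text \<open>Block structure: the coordinates 'n of R^d are partitioned into blocks
  indexed by 'b via blk :: 'n => 'b (block i = {j. blk j = i}, of size d_i).\<close>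

definition block_diag :: "('n::finite \<Rightarrow> 'b) \<Rightarrow> real^'n^'n \<Rightarrow> bool" where
  "block_diag blk A \<longleftrightarrow> (\<forall>i j. blk i \<noteq> blk j \<longrightarrow> A $ i $ j = 0)"

definition sym_mat :: "real^'n^'n \<Rightarrow> bool" where
  "sym_mat A \<longleftrightarrow> transpose A = A"

text \<open>vectors supported on block b (i.e. the copy of R^{d_b} inside R^d)\<close>
definition block_vec :: "('n::finite \<Rightarrow> 'b) \<Rightarrow> 'b \<Rightarrow> real^'n \<Rightarrow> bool" where
  "block_vec blk b v \<longleftrightarrow> (\<forall>i. blk i \<noteq> b \<longrightarrow> v $ i = 0)"

definition block_pd :: "('n::finite \<Rightarrow> 'b) \<Rightarrow> 'b \<Rightarrow> real^'n^'n \<Rightarrow> bool" where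
  "block_pd blk b A \<longleftrightarrow> (\<forall>v. block_vec blk b v \<and> v \<noteq> 0 \<longrightarrow> v \<bullet> (A *v v) > 0)"

definition block_psd :: "('n::finite \<Rightarrow> 'b) \<Rightarrow> 'b \<Rightarrow> real^'n^'n \<Rightarrow> bool" where
  "block_psd blk b A \<longleftrightarrow> (\<forall>v. block_vec blk b v \<longrightarrow> v \<bullet> (A *v v) \<ge> 0)"

definition psd_mat :: "real^'n^'n \<Rightarrow> bool" where
  "psd_mat A \<longleftrightarrow> (\<forall>v. v \<bullet> (A *v v) \<ge> 0)"

definition block_lambda_max :: "('n::finite \<Rightarrow> 'b) \<Rightarrow> 'b \<Rightarrow> real^'n^'n \<Rightarrow> real" where
  "block_lambda_max blk b A =
     Max {c. \<exists>v. block_vec blk b v \<and> v \<noteq> 0 \<and> A *v v = c *\<^sub>R v}"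

definition psd_sqrt :: "real^'n^'n \<Rightarrow> real^'n^'n" where
  "psd_sqrt A = (THE R. sym_mat R \<and> psd_mat R \<and> R ** R = A)"

definition block_scal :: "('n::finite \<Rightarrow> 'b) \<Rightarrow> ('b \<Rightarrow> real) \<Rightarrow> real^'n^'n" where
  "block_scal blk \<gamma> = (\<chi> i j. if i = j then \<gamma> (blk i) else 0)"

definition qnorm_sq :: "real^'n^'n \<Rightarrow> real^'n \<Rightarrow> real" where
  "qnorm_sq Q x = (Q *v x) \<bullet> x"

end

theory Submission
  imports Defs
begin

text \<open>By the smoothness inequality, one step \<open>x - D S g\<close> with \<open>D = \<Gamma> W\<close> and \<open>g = \<nabla>f(x)\<close> decreases \<open>f\<close>
  up to the linear term \<open>\<langle>g, D S g\<rangle>\<close> and the curvature term \<open>\<langle>L D S g, D S g\<rangle>\<close>. Given \<open>x\<close>, the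
  sketch is independent of it and has mean \<open>I\<close>, so the linear term averages to \<open>\<parallel>g\<parallel>\<^sup>2\<^sub>D\<close>. Since \<open>\<Gamma>\<close>
  commutes with everything block-diagonal, the curvature term equals
  \<open>\<langle>\<Gamma>g, W\<^sup>1\<^sup>/\<^sup>2 Y W\<^sup>1\<^sup>/\<^sup>2 \<Gamma>g\<rangle>\<close> with \<open>Y = W\<^sup>-\<^sup>1\<^sup>/\<^sup>2 S W L W S W\<^sup>-\<^sup>1\<^sup>/\<^sup>2\<close>, and the stepsize rule
  \<open>\<gamma>\<^sub>i \<le> 1 / \<lambda>\<^sub>m\<^sub>a\<^sub>x(E Y\<^sub>i)\<close> bounds its expectation blockwise by \<open>\<parallel>g\<parallel>\<^sup>2\<^sub>D\<close>. Hence
  \<open>E f(x\<^sup>k\<^sup>+\<^sup>1) \<le> E f(x\<^sup>k) - E \<parallel>\<nabla>f(x\<^sup>k)\<parallel>\<^sup>2\<^sub>D / 2\<close>; telescoping from \<open>f(x\<^sup>0) - f\<^sup>i\<^sup>n\<^sup>f\<close> and rescaling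
  the norm by \<open>det(D)\<^sup>1\<^sup>/\<^sup>d\<close> gives the bound.\<close>

section \<open>Symmetric matrices\<close>

lemma sym_mat_inner_commute:
  assumes "sym_mat A"
  shows "(A *v x) \<bullet> y = x \<bullet> (A *v y)"
proof -
  have "x \<bullet> (A *v y) = (x v* A) \<bullet> y" by (simp add: dot_lmul_matrix)
  also have "x v* A = transpose A *v x" by simp
  also have "transpose A = A" using assms by (simp add: sym_mat_def)
  finally show ?thesis by (rule sym)
qed

lemma inner_matrix_vector_congruence:
  fixes A P :: "real^'n^'n"
  shows "(A *v (P *v z)) \<bullet> (P *v z) = z \<bullet> ((transpose P ** A ** P) *v z)"
proof -
  have "(A *v (P *v z)) \<bullet> (P *v z) = (P *v z) \<bullet> (A *v (P *v z))"
    by (rule inner_commute)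
  also have "\<dots> = z \<bullet> (transpose P *v (A *v (P *v z)))"
    using dot_lmul_matrix[of z "transpose P"] by simp
  also have "\<dots> = z \<bullet> ((transpose P ** A ** P) *v z)"
    by (simp only: matrix_vector_mul_assoc matrix_mul_assoc)
  finally show ?thesis .
qed

lemma matrix_inv_eqI:
  fixes A :: "'a::semiring_1^'n^'n"
  assumes "A ** B = mat 1" "B ** A = mat 1"
  shows "matrix_inv A = B"
  unfolding matrix_inv_def
proof (rule some_equality)
  fix C assume "A ** C = mat 1 \<and> C ** A = mat 1"
  then show "C = B" using assms by (metis matrix_mul_assoc matrix_mul_lid matrix_mul_rid)
qed (use assms in simp)

lemma linear_coeff_zero_if_quadratic_nonpos:
  fixes a b :: real
  assumes "\<And>t. 2 * t * a + t\<^sup>2 * b \<le> 0"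
  shows "a = 0"
proof -
  define s where "s = 1 / (\<bar>b\<bar> + 1)"
  have s: "s > 0" "s * \<bar>b\<bar> < 1"
    unfolding s_def by (auto simp: field_simps)
  have "s * b > -1" using s abs_ge_minus_self[of b] mult_left_mono[of "-b" "\<bar>b\<bar>" s]
    by linarith
  then have pos: "s * (2 + s * b) > 0" using s by (intro mult_pos_pos) auto
  have "a\<^sup>2 * (s * (2 + s * b)) = 2 * (s * a) * a + (s * a)\<^sup>2 * b"
    by (simp add: power2_eq_square algebra_simps)
  also have "\<dots> \<le> 0" by (rule assms)
  finally show ?thesis using pos by (metis mult_pos_pos not_less zero_less_power2)
qed

text \<open>The quadratic form attains its maximum \<open>\<mu>\<close> on the compact unit sphere of \<open>U\<close>, and the
  first-order condition at the maximiser \<open>v\<close> along every direction of \<open>U\<close> forces \<open>A v = \<mu> v\<close>.\<close>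
lemma sym_mat_rayleigh_max_eigenvector:
  fixes A :: "real^'n^'n"
  assumes sym: "sym_mat A" and U: "subspace U" and inv: "\<And>u. u \<in> U \<Longrightarrow> A *v u \<in> U"
    and nontriv: "U \<noteq> {0}"
  obtains v where "v \<in> U" "norm v = 1" "A *v v = (v \<bullet> (A *v v)) *\<^sub>R v"
    "\<And>y. y \<in> U \<Longrightarrow> y \<bullet> (A *v y) \<le> (v \<bullet> (A *v v)) * (y \<bullet> y)"
proof -
  define K where "K = U \<inter> sphere 0 1"
  have "compact K" unfolding K_def
    by (metis Int_commute compact_Int_closed compact_sphere closed_subspace U)
  obtain u where u: "u \<in> U" "u \<noteq> 0" using nontriv U subspace_0 by blast
  then have "u /\<^sub>R norm u \<in> K" unfolding K_def using U by (simp add: subspace_scale)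
  then have "K \<noteq> {}" by blast
  have "continuous_on K (\<lambda>w. w \<bullet> (A *v w))"
    by (intro continuous_intros)
  then obtain v where v: "v \<in> K" and vmax: "\<And>y. y \<in> K \<Longrightarrow> y \<bullet> (A *v y) \<le> v \<bullet> (A *v v)"
    using continuous_attains_sup[OF \<open>compact K\<close> \<open>K \<noteq> {}\<close>] by blast
  define \<mu> where "\<mu> = v \<bullet> (A *v v)"
  have vU: "v \<in> U" and nv: "norm v = 1" using v unfolding K_def by auto
  have vv: "v \<bullet> v = 1" using nv by (simp add: norm_eq_1)
  have bound: "y \<bullet> (A *v y) \<le> \<mu> * (y \<bullet> y)" if "y \<in> U" for y
  proof (cases "y = 0")
    case False
    have "y /\<^sub>R norm y \<in> K" unfolding K_def using that False U by (simp add: subspace_scale)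
    then have "(y /\<^sub>R norm y) \<bullet> (A *v (y /\<^sub>R norm y)) \<le> \<mu>" using vmax \<mu>_def by blast
    then have "(y \<bullet> (A *v y)) / (norm y)\<^sup>2 \<le> \<mu>"
      by (simp add: matrix_vector_mult_scaleR power2_eq_square divide_inverse ac_simps)
    then show ?thesis using False by (simp add: divide_le_eq power2_norm_eq_inner)
  qed simp
  define w where "w = A *v v - \<mu> *\<^sub>R v"
  have wU: "w \<in> U" unfolding w_def using inv vU U by (simp add: subspace_diff subspace_scale)
  have vAw: "v \<bullet> (A *v w) = w \<bullet> (A *v v)"
    using sym_mat_inner_commute[OF sym, of w v] by (simp add: inner_commute)
  have "2 * t * (w \<bullet> (A *v v) - \<mu> * (v \<bullet> w)) + t\<^sup>2 * (w \<bullet> (A *v w) - \<mu> * (w \<bullet> w)) \<le> 0" for t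
  proof -
    have "v + t *\<^sub>R w \<in> U" using vU wU U by (simp add: subspace_add subspace_scale)
    from bound[OF this] vv vAw show ?thesis
      by (simp add: matrix_vector_right_distrib matrix_vector_mult_scaleR inner_add_left
          inner_add_right power2_eq_square algebra_simps inner_commute \<mu>_def)
  qed
  then have "w \<bullet> (A *v v) - \<mu> * (v \<bullet> w) = 0" by (rule linear_coeff_zero_if_quadratic_nonpos)
  then have "w \<bullet> w = 0" unfolding w_def
    by (simp add: inner_diff_left inner_diff_right inner_commute vv algebra_simps)
  then have "A *v v = \<mu> *\<^sub>R v" unfolding w_def by simp
  then show ?thesis using that[OF vU nv] bound unfolding \<mu>_def by blast
qed

lemma span_insert_orthogonal_complement:
  assumes U: "subspace U" and v: "v \<in> U" "v \<bullet> v = 1"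
    and B: "insert v B \<subseteq> U" "span B = {w \<in> U. v \<bullet> w = 0}"
  shows "span (insert v B) = U"
proof
  show "span (insert v B) \<subseteq> U" using B(1) U by (rule span_minimal)
  show "U \<subseteq> span (insert v B)"
  proof
    fix u assume u: "u \<in> U"
    have "u - (v \<bullet> u) *\<^sub>R v \<in> span B" unfolding B(2) using u v U
      by (simp add: subspace_diff subspace_scale inner_diff_right)
    then have "(u - (v \<bullet> u) *\<^sub>R v) + (v \<bullet> u) *\<^sub>R v \<in> span (insert v B)"
      by (meson span_add span_base span_mono span_scale insertI1 subset_insertI subsetD)
    then show "u \<in> span (insert v B)" by simp
  qed
qed

lemma sym_mat_invariant_subspace_eigenbasis:
  fixes A :: "real^'n^'n"
  assumes sym: "sym_mat A"
  shows "subspace U \<Longrightarrow> (\<And>u. u \<in> U \<Longrightarrow> A *v u \<in> U) \<Longrightarrow>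
    \<exists>B. finite B \<and> B \<subseteq> U \<and> pairwise orthogonal B \<and> (\<forall>v\<in>B. norm v = 1) \<and>
        (\<forall>v\<in>B. \<exists>c. A *v v = c *\<^sub>R v) \<and> span B = U"
proof (induction "dim U" arbitrary: U rule: less_induct)
  case (less U)
  show ?case
  proof (cases "U = {0}")
    case True
    then show ?thesis by (intro exI[of _ "{}"]) auto
  next
    case False
    obtain v where vU: "v \<in> U" and nv: "norm v = 1" and ev: "A *v v = (v \<bullet> (A *v v)) *\<^sub>R v"
      using sym_mat_rayleigh_max_eigenvector[OF sym less.prems False] by blast
    have vv: "v \<bullet> v = 1" using nv by (simp add: norm_eq_1)
    define U' where "U' = {w \<in> U. v \<bullet> w = 0}"
    have sU': "subspace U'" unfolding U'_def using less.prems(1)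
      by (auto simp: subspace_def inner_add_right)
    have iU': "A *v u \<in> U'" if "u \<in> U'" for u
    proof -
      have "v \<bullet> (A *v u) = (A *v v) \<bullet> u" by (simp add: sym_mat_inner_commute[OF sym])
      also have "\<dots> = 0" using that unfolding U'_def by (subst ev) simp
      finally show ?thesis using that less.prems(2) unfolding U'_def by auto
    qed
    have "U' \<subset> U" using vU vv unfolding U'_def by (metis (mono_tags) mem_Collect_eq psubsetI subsetI zero_neq_one)
    then have "dim U' < dim U"
      using sU' less.prems(1) by (metis dim_psubset span_eq_iff)
    from less.hyps[OF this sU' iU'] obtain B where B: "finite B" "B \<subseteq> U'" "pairwise orthogonal B"
      "\<forall>v\<in>B. norm v = 1" "\<forall>v\<in>B. \<exists>c. A *v v = c *\<^sub>R v" "span B = U'"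
      by blast
    have sub: "insert v B \<subseteq> U" using B(2) vU unfolding U'_def by auto
    have span: "span (insert v B) = U"
      using less.prems(1) vU vv sub B(6) unfolding U'_def by (rule span_insert_orthogonal_complement)
    show ?thesis
    proof (intro exI[of _ "insert v B"] conjI)
      show "finite (insert v B)" using B(1) by simp
      show "pairwise orthogonal (insert v B)"
        using B(2,3) unfolding U'_def pairwise_insert by (auto simp: orthogonal_def inner_commute)
      show "\<forall>w\<in>insert v B. norm w = 1" using B(4) nv by blast
      show "\<forall>w\<in>insert v B. \<exists>c. A *v w = c *\<^sub>R w"
        using B(5) ev by blast
    qed (fact sub span)+
  qed
qed

lemma sym_mat_finite_eigenvalues:
  fixes A :: "real^'n^'n"
  assumes sym: "sym_mat A"
  shows "finite {c. \<exists>v. v \<noteq> 0 \<and> A *v v = c *\<^sub>R v}" (is "finite ?E")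
proof -
  define ev where "ev c = (SOME v. v \<noteq> 0 \<and> A *v v = c *\<^sub>R v)" for c
  have ev: "ev c \<noteq> 0" "A *v ev c = c *\<^sub>R ev c" if "c \<in> ?E" for c
    using someI_ex[OF that[unfolded mem_Collect_eq]] unfolding ev_def by blast+
  have inj: "inj_on ev ?E"
  proof (rule inj_onI)
    fix c d assume c: "c \<in> ?E" and d: "d \<in> ?E" and eq: "ev c = ev d"
    have "c *\<^sub>R ev c = d *\<^sub>R ev c" by (metis ev(2)[OF c] ev(2)[OF d] eq)
    then show "c = d" using ev(1)[OF c] by simp
  qed
  have "pairwise orthogonal (ev ` ?E)"
  proof (rule pairwiseI)
    fix x y assume "x \<in> ev ` ?E" "y \<in> ev ` ?E" "x \<noteq> y"
    then obtain c d where c: "c \<in> ?E" and d: "d \<in> ?E" and xy: "x = ev c" "y = ev d" "c \<noteq> d"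
      by blast
    have "c * (ev c \<bullet> ev d) = (A *v ev c) \<bullet> ev d" using ev(2)[OF c] by simp
    also have "\<dots> = ev c \<bullet> (A *v ev d)" by (rule sym_mat_inner_commute[OF sym])
    also have "\<dots> = d * (ev c \<bullet> ev d)" using ev(2)[OF d] by simp
    finally show "orthogonal x y" using xy by (simp add: orthogonal_def)
  qed
  moreover have "0 \<notin> ev ` ?E" using ev(1) by force
  ultimately have "independent (ev ` ?E)" by (rule pairwise_orthogonal_independent)
  then have "finite (ev ` ?E)" by (rule independent_imp_finite)
  then show ?thesis using inj by (rule finite_imageD)
qed

section \<open>Matrices with a prescribed orthonormal eigenbasis\<close>

definition is_onb :: "(real^'n) set \<Rightarrow> bool" where
  "is_onb B \<longleftrightarrow> finite B \<and> pairwise orthogonal B \<and> (\<forall>v\<in>B. norm v = 1) \<and> span B = UNIV"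

definition spectral_mat :: "(real^'n) set \<Rightarrow> (real^'n \<Rightarrow> real) \<Rightarrow> real^'n^'n" where
  "spectral_mat B h = (\<chi> i j. \<Sum>v\<in>B. h v * v$i * v$j)"

lemma spectral_mat_mult_vec:
  "spectral_mat B h *v x = (\<Sum>v\<in>B. (h v * (v \<bullet> x)) *\<^sub>R v)"
unfolding vec_eq_iff
proof
  fix i
  have "(spectral_mat B h *v x) $ i = (\<Sum>j\<in>UNIV. (\<Sum>v\<in>B. h v * v$i * v$j) * x$j)"
    by (simp add: spectral_mat_def matrix_vector_mult_def)
  also have "\<dots> = (\<Sum>v\<in>B. \<Sum>j\<in>UNIV. h v * v$i * v$j * x$j)"
    unfolding sum_distrib_right by (rule sum.swap)
  also have "\<dots> = (\<Sum>v\<in>B. (h v * (v \<bullet> x)) * v$i)"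
    by (rule sum.cong[OF refl]) (simp add: inner_vec_def sum_distrib_left mult_ac)
  finally show "(spectral_mat B h *v x) $ i = (\<Sum>v\<in>B. (h v * (v \<bullet> x)) *\<^sub>R v) $ i"
    by (simp add: sum_component)
qed

lemma is_onb_inner: "is_onb B \<Longrightarrow> v \<in> B \<Longrightarrow> w \<in> B \<Longrightarrow> v \<bullet> w = (if v = w then 1 else 0)"
  unfolding is_onb_def pairwise_def orthogonal_def by (auto simp: norm_eq_1)

lemma is_onb_expand: "is_onb B \<Longrightarrow> (\<Sum>v\<in>B. (v \<bullet> x) *\<^sub>R v) = x"
  using orthonormal_basis_expand[of B x] unfolding is_onb_def by (simp add: inner_commute)

lemma matrix_eq_on_onb:
  assumes "is_onb B" "\<And>v. v \<in> B \<Longrightarrow> P *v v = Q *v v"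
  shows "P = Q"
  unfolding matrix_eq
proof
  fix x
  have "P *v x = (\<Sum>v\<in>B. (v \<bullet> x) *\<^sub>R (P *v v))"
    by (subst is_onb_expand[OF assms(1), symmetric])
       (simp add: linear_sum[OF matrix_vector_mul_linear] matrix_vector_mult_scaleR)
  also have "\<dots> = Q *v x"
    by (subst (2) is_onb_expand[OF assms(1), symmetric])
       (simp add: assms(2) linear_sum[OF matrix_vector_mul_linear] matrix_vector_mult_scaleR)
  finally show "P *v x = Q *v x" .
qed

lemma spectral_mat_eigenvector:
  assumes "is_onb B" "w \<in> B"
  shows "spectral_mat B h *v w = h w *\<^sub>R w"
proof -
  have fin: "finite B" using assms(1) by (simp add: is_onb_def)
  have "spectral_mat B h *v w = (\<Sum>v\<in>B. if v = w then h w *\<^sub>R w else 0)"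
    unfolding spectral_mat_mult_vec
    by (rule sum.cong) (auto simp: is_onb_inner[OF assms(1) _ assms(2)])
  then show ?thesis using assms(2) fin by simp
qed

lemma spectral_mat_eigenbasis:
  assumes "is_onb B" "\<And>v. v \<in> B \<Longrightarrow> A *v v = h v *\<^sub>R v"
  shows "spectral_mat B h = A"
  by (rule matrix_eq_on_onb[OF assms(1)]) (simp add: spectral_mat_eigenvector[OF assms(1)] assms(2))

lemma spectral_mat_mult:
  assumes "is_onb B"
  shows "spectral_mat B h ** spectral_mat B k = spectral_mat B (\<lambda>v. h v * k v)"
proof (rule matrix_eq_on_onb[OF assms])
  fix v assume "v \<in> B"
  have "(spectral_mat B h ** spectral_mat B k) *v v = spectral_mat B h *v (spectral_mat B k *v v)"
    by (simp only: matrix_vector_mul_assoc)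
  then show "(spectral_mat B h ** spectral_mat B k) *v v = spectral_mat B (\<lambda>v. h v * k v) *v v"
    by (simp add: spectral_mat_eigenvector[OF assms \<open>v \<in> B\<close>] matrix_vector_mult_scaleR)
qed

lemma spectral_mat_one:
  assumes "is_onb B"
  shows "spectral_mat B (\<lambda>_. 1) = mat 1"
  by (rule matrix_eq_on_onb[OF assms]) (simp add: spectral_mat_eigenvector[OF assms])

lemma spectral_mat_cong: "(\<And>v. v \<in> B \<Longrightarrow> h v = k v) \<Longrightarrow> spectral_mat B h = spectral_mat B k"
  unfolding spectral_mat_def by (simp cong: sum.cong)

lemma sym_mat_spectral_mat: "sym_mat (spectral_mat B h)"
  by (simp add: sym_mat_def spectral_mat_def transpose_def vec_eq_iff ac_simps)

lemma psd_mat_spectral_mat: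
  assumes "finite B" "\<And>v. v \<in> B \<Longrightarrow> h v \<ge> 0"
  shows "psd_mat (spectral_mat B h)"
  unfolding psd_mat_def
proof
  fix x
  have "x \<bullet> (spectral_mat B h *v x) = (\<Sum>v\<in>B. h v * (v \<bullet> x)\<^sup>2)"
    by (simp add: spectral_mat_mult_vec inner_sum_right inner_commute
        power2_eq_square mult.assoc)
  also have "\<dots> \<ge> 0" by (simp add: assms(2) sum_nonneg)
  finally show "x \<bullet> (spectral_mat B h *v x) \<ge> 0" .
qed

lemma matrix_inv_spectral_mat:
  assumes B: "is_onb B" and h: "\<And>v. v \<in> B \<Longrightarrow> h v \<noteq> 0"
  shows "matrix_inv (spectral_mat B h) = spectral_mat B (\<lambda>v. inverse (h v))"
proof -
  have "spectral_mat B h ** spectral_mat B (\<lambda>v. inverse (h v)) = mat 1"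
    "spectral_mat B (\<lambda>v. inverse (h v)) ** spectral_mat B h = mat 1"
    by (simp_all add: spectral_mat_mult[OF B] h spectral_mat_one[OF B, symmetric]
        cong: spectral_mat_cong)
  then show ?thesis by (rule matrix_inv_eqI)
qed

text \<open>\<open>w = Q v - s v\<close> satisfies \<open>Q w = -s w\<close>, which positive semidefiniteness rules out for
  \<open>s > 0\<close> unless \<open>w = 0\<close>; for \<open>s = 0\<close>, \<open>\<parallel>Q v\<parallel>\<^sup>2 = \<langle>v, Q Q v\<rangle> = 0\<close>.\<close>
lemma psd_mat_square_eigenvector:
  assumes Q: "sym_mat Q" "psd_mat Q" and s: "s \<ge> 0" and QQv: "Q *v (Q *v v) = (s * s) *\<^sub>R v"
  shows "Q *v v = s *\<^sub>R v"
proof -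
  define w where "w = Q *v v - s *\<^sub>R v"
  have "w = 0"
  proof (cases "s = 0")
    case True
    have "w \<bullet> w = v \<bullet> (Q *v (Q *v v))"
      using True Q(1) by (simp add: w_def sym_mat_inner_commute)
    then show ?thesis using True QQv by simp
  next
    case False
    have "Q *v w = Q *v (Q *v v) - s *\<^sub>R (Q *v v)"
      unfolding w_def by (simp only: matrix_vector_mult_diff_distrib matrix_vector_mult_scaleR)
    also have "\<dots> = - s *\<^sub>R w" unfolding QQv w_def by (simp add: scaleR_diff_right)
    finally have Qw: "Q *v w = - s *\<^sub>R w" .
    have "0 \<le> w \<bullet> (Q *v w)" using Q(2) by (simp add: psd_mat_def)
    then have "w \<bullet> w \<le> 0" using False s by (simp add: Qw mult_le_0_iff)
    then show ?thesis by (metis inner_ge_zero inner_eq_zero_iff order_antisym)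
  qed
  then show ?thesis by (simp add: w_def)
qed

lemma psd_sqrt_spectral_mat:
  assumes B: "is_onb B" and h: "\<And>v. v \<in> B \<Longrightarrow> h v \<ge> 0"
  shows "psd_sqrt (spectral_mat B h) = spectral_mat B (\<lambda>v. sqrt (h v))"
  unfolding psd_sqrt_def
proof (rule the_equality)
  let ?R = "spectral_mat B (\<lambda>v. sqrt (h v))"
  have "?R ** ?R = spectral_mat B h"
    by (simp add: spectral_mat_mult[OF B] h cong: spectral_mat_cong)
  moreover have "psd_mat ?R" using B h by (intro psd_mat_spectral_mat) (auto simp: is_onb_def)
  ultimately show "sym_mat ?R \<and> psd_mat ?R \<and> ?R ** ?R = spectral_mat B h"
    by (simp add: sym_mat_spectral_mat)
  fix Q assume Q: "sym_mat Q \<and> psd_mat Q \<and> Q ** Q = spectral_mat B h"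
  show "Q = ?R"
  proof (rule matrix_eq_on_onb[OF B])
    fix v assume v: "v \<in> B"
    define s where "s = sqrt (h v)"
    have QQv: "Q *v (Q *v v) = (s * s) *\<^sub>R v"
      using Q h[OF v] by (simp add: s_def matrix_vector_mul_assoc spectral_mat_eigenvector[OF B v])
    have "Q *v v = s *\<^sub>R v"
      using Q by (intro psd_mat_square_eigenvector QQv) (simp_all add: s_def h[OF v])
    then show "Q *v v = ?R *v v" by (simp add: spectral_mat_eigenvector[OF B v] s_def)
  qed
qed

section \<open>Block-diagonal matrices\<close>

definition block_part :: "('n::finite \<Rightarrow> 'b) \<Rightarrow> 'b \<Rightarrow> real^'n \<Rightarrow> real^'n" where
  "block_part blk b v = (\<chi> i. if blk i = b then v$i else 0)"

lemma block_vec_block_part: "block_vec blk b (block_part blk b v)"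
  by (simp add: block_vec_def block_part_def)

lemma sum_block_part: "(\<Sum>b\<in>(UNIV::'b::finite set). block_part blk b v) = v"
  by (simp add: vec_eq_iff sum_component block_part_def)

lemma subspace_block_vec: "subspace {v. block_vec blk b v}"
  by (simp add: subspace_def block_vec_def)

lemma inner_block_vec_eq_0:
  assumes "block_vec blk b u" "block_vec blk c w" "b \<noteq> c"
  shows "u \<bullet> w = 0"
proof -
  have "u$i * w$i = 0" for i using assms unfolding block_vec_def by (metis mult_eq_0_iff)
  then show ?thesis unfolding inner_vec_def inner_real_def by (intro sum.neutral) blast
qed

lemma block_vec_block_diag_mult:
  assumes "block_diag blk A" "block_vec blk b v"
  shows "block_vec blk b (A *v v)"
  using assms unfolding block_vec_def block_diag_def matrix_vector_mult_def
  by (auto intro!: sum.neutral) metis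

lemma block_diag_mult:
  assumes "block_diag blk A" "block_diag blk B"
  shows "block_diag blk (A ** B)"
  using assms unfolding block_diag_def matrix_matrix_mult_def
  by (auto intro!: sum.neutral) (metis mult_eq_0_iff)

lemma block_diag_inner_split:
  fixes blk :: "'n::finite \<Rightarrow> 'b::finite"
  assumes "block_diag blk A"
  shows "x \<bullet> (A *v y) = (\<Sum>b\<in>UNIV. block_part blk b x \<bullet> (A *v block_part blk b y))"
proof -
  have cross: "block_part blk b x \<bullet> (A *v block_part blk c y) = 0" if "c \<noteq> b" for b c
    using inner_block_vec_eq_0[OF block_vec_block_part
        block_vec_block_diag_mult[OF assms block_vec_block_part]] that by simp
  have "x \<bullet> (A *v y) = (\<Sum>b\<in>UNIV. block_part blk b x) \<bullet> (A *v (\<Sum>c\<in>UNIV. block_part blk c y))"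
    by (simp only: sum_block_part)
  also have "\<dots> = (\<Sum>c\<in>UNIV. \<Sum>b\<in>UNIV. block_part blk b x \<bullet> (A *v block_part blk c y))"
    by (simp add: inner_sum_left inner_sum_right linear_sum[OF matrix_vector_mul_linear])
  also have "\<dots> = (\<Sum>b\<in>UNIV. \<Sum>c\<in>UNIV. block_part blk b x \<bullet> (A *v block_part blk c y))"
    by (rule sum.swap)
  also have "\<dots> = (\<Sum>b\<in>UNIV. block_part blk b x \<bullet> (A *v block_part blk b y))"
  proof (rule sum.cong[OF refl])
    fix b :: 'b
    have "(\<Sum>c\<in>UNIV - {b}. block_part blk b x \<bullet> (A *v block_part blk c y)) = 0"
      by (rule sum.neutral) (simp add: cross)
    then show "(\<Sum>c\<in>UNIV. block_part blk b x \<bullet> (A *v block_part blk c y))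
        = block_part blk b x \<bullet> (A *v block_part blk b y)"
      by (simp add: sum.remove[of UNIV b])
  qed
  finally show ?thesis .
qed

lemma block_diag_sym_mat_eigenbasis:
  fixes A :: "real^'n^'n" and blk :: "'n \<Rightarrow> 'b::finite"
  assumes sym: "sym_mat A" and bd: "block_diag blk A"
  obtains B where "is_onb B" "\<And>v. v \<in> B \<Longrightarrow> \<exists>c. A *v v = c *\<^sub>R v"
    "\<And>v. v \<in> B \<Longrightarrow> \<exists>b. block_vec blk b v"
proof -
  have "\<exists>C. finite C \<and> C \<subseteq> {v. block_vec blk b v} \<and> pairwise orthogonal C \<and>
      (\<forall>v\<in>C. norm v = 1) \<and> (\<forall>v\<in>C. \<exists>c. A *v v = c *\<^sub>R v) \<and> span C = {v. block_vec blk b v}"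
    for b using block_vec_block_diag_mult[OF bd]
    by (intro sym_mat_invariant_subspace_eigenbasis[OF sym subspace_block_vec]) blast
  then obtain C where C: "\<And>b. finite (C b)" "\<And>b. C b \<subseteq> {v. block_vec blk b v}"
    "\<And>b. pairwise orthogonal (C b)" "\<And>b. \<forall>v\<in>C b. norm v = 1"
    "\<And>b. \<forall>v\<in>C b. \<exists>c. A *v v = c *\<^sub>R v" "\<And>b. span (C b) = {v. block_vec blk b v}"
    by (metis (no_types))
  define B where "B = (\<Union>b. C b)"
  have "pairwise orthogonal B"
    unfolding pairwise_def B_def
  proof clarify
    fix u w b c assume u: "u \<in> C b" and w: "w \<in> C c" and "u \<noteq> w"
    show "orthogonal u w"
    proof (cases "b = c")
      case True
      then show ?thesis using C(3)[of b] u w \<open>u \<noteq> w\<close> unfolding pairwise_def by blast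
    next
      case False
      have "block_vec blk b u" "block_vec blk c w" using C(2) u w by blast+
      then show ?thesis unfolding orthogonal_def using False by (rule inner_block_vec_eq_0)
    qed
  qed
  moreover have "span B = UNIV"
  proof -
    have "block_part blk b x \<in> span B" for b x
    proof -
      have "block_part blk b x \<in> span (C b)" using C(6) block_vec_block_part by simp
      moreover have "span (C b) \<subseteq> span B" unfolding B_def by (rule span_mono) blast
      ultimately show ?thesis by blast
    qed
    then have "(\<Sum>b\<in>UNIV. block_part blk b x) \<in> span B" for x by (simp add: span_sum)
    then show ?thesis by (auto simp: sum_block_part)
  qed
  ultimately have "is_onb B" using C(1,4) unfolding is_onb_def B_def by simp
  then show ?thesis using that C(2,5) unfolding B_def by blast
qed

lemma block_diag_spectral_mat:
  assumes "\<And>v. v \<in> B \<Longrightarrow> \<exists>b. block_vec blk b v"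
  shows "block_diag blk (spectral_mat B h)"
  unfolding block_diag_def spectral_mat_def
proof (intro allI impI)
  fix i j assume "blk i \<noteq> blk j"
  then have "v$i * v$j = 0" if "v \<in> B" for v
    using assms[OF that] unfolding block_vec_def by (metis mult_eq_0_iff)
  then show "(\<chi> i j. \<Sum>v\<in>B. h v * v$i * v$j) $ i $ j = 0" by (simp add: sum.neutral)
qed

lemma obtain_block_pd_sqrt:
  fixes W :: "real^'n^'n" and blk :: "'n \<Rightarrow> 'b::finite"
  assumes sym: "sym_mat W" and bd: "block_diag blk W" and pd: "\<And>b. block_pd blk b W"
  obtains R where "sym_mat R" "block_diag blk R" "R ** R = W"
    "psd_sqrt (matrix_inv W) ** R = mat 1" "R ** psd_sqrt (matrix_inv W) = mat 1"
    "sym_mat (psd_sqrt (matrix_inv W))" "block_diag blk (psd_sqrt (matrix_inv W))"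
proof -
  obtain B where B: "is_onb B" and eig: "\<And>v. v \<in> B \<Longrightarrow> \<exists>c. W *v v = c *\<^sub>R v"
    and blocks: "\<And>v. v \<in> B \<Longrightarrow> \<exists>b. block_vec blk b v"
    using block_diag_sym_mat_eigenbasis[OF sym bd] by blast
  define lam where "lam v = v \<bullet> (W *v v)" for v
  have eig_lam: "W *v v = lam v *\<^sub>R v" if v: "v \<in> B" for v
  proof -
    obtain c where c: "W *v v = c *\<^sub>R v" using eig[OF v] by blast
    have "v \<bullet> v = 1" using B v by (simp add: is_onb_def norm_eq_1)
    then show ?thesis using c by (simp add: lam_def)
  qed
  have pos: "lam v > 0" if "v \<in> B" for v
  proof -
    have "v \<noteq> 0" using B that by (auto simp: is_onb_def)
    then show ?thesis using pd blocks[OF that] unfolding block_pd_def lam_def by blast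
  qed
  have W: "W = spectral_mat B lam" by (rule spectral_mat_eigenbasis[OF B eig_lam, symmetric])
  have "matrix_inv W = spectral_mat B (\<lambda>v. inverse (lam v))"
    unfolding W using pos by (intro matrix_inv_spectral_mat[OF B]) force
  then have Rinv: "psd_sqrt (matrix_inv W) = spectral_mat B (\<lambda>v. sqrt (inverse (lam v)))"
    using pos by (simp add: psd_sqrt_spectral_mat[OF B] less_imp_le)
  define R where "R = spectral_mat B (\<lambda>v. sqrt (lam v))"
  have "R ** R = W" "psd_sqrt (matrix_inv W) ** R = mat 1" "R ** psd_sqrt (matrix_inv W) = mat 1"
    unfolding R_def Rinv using pos
    by (simp_all add: W spectral_mat_mult[OF B] spectral_mat_one[OF B, symmetric]
        real_sqrt_mult[symmetric] less_imp_le less_imp_neq[symmetric] cong: spectral_mat_cong)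
  moreover have "sym_mat R" "block_diag blk R"
    "sym_mat (psd_sqrt (matrix_inv W))" "block_diag blk (psd_sqrt (matrix_inv W))"
    unfolding R_def Rinv by (simp_all add: sym_mat_spectral_mat block_diag_spectral_mat blocks)
  ultimately show ?thesis using that by blast
qed

text \<open>The maximiser of the Rayleigh quotient on block \<open>b\<close> is an eigenvector whose eigenvalue
  dominates all others there, so it is the \<open>Max\<close> in \<open>block_lambda_max\<close>; that set is finite.\<close>
lemma rayleigh_le_block_lambda_max:
  fixes E :: "real^'n^'n"
  assumes sym: "sym_mat E" and bd: "block_diag blk E" and v: "block_vec blk b v"
  shows "v \<bullet> (E *v v) \<le> block_lambda_max blk b E * (v \<bullet> v)"
proof (cases "v = 0")
  case False
  let ?U = "{u. block_vec blk b u}"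
  have nontriv: "?U \<noteq> {0}" using v False by blast
  have inv: "E *v y \<in> ?U" if "y \<in> ?U" for y
    using block_vec_block_diag_mult[OF bd] that by simp
  obtain u where u: "u \<in> ?U" "norm u = 1" "E *v u = (u \<bullet> (E *v u)) *\<^sub>R u"
    and max: "\<And>y. y \<in> ?U \<Longrightarrow> y \<bullet> (E *v y) \<le> (u \<bullet> (E *v u)) * (y \<bullet> y)"
    using sym_mat_rayleigh_max_eigenvector[OF sym subspace_block_vec inv nontriv] by blast
  define Eig where "Eig = {c. \<exists>v. block_vec blk b v \<and> v \<noteq> 0 \<and> E *v v = c *\<^sub>R v}"
  have "finite Eig"
    using sym_mat_finite_eigenvalues[OF sym] by (rule rev_finite_subset) (auto simp: Eig_def)
  moreover have "c \<le> u \<bullet> (E *v u)" if c: "c \<in> Eig" for c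
  proof -
    obtain w where w: "block_vec blk b w" "w \<noteq> 0" "E *v w = c *\<^sub>R w"
      using c unfolding Eig_def by blast
    then have "c * (w \<bullet> w) \<le> (u \<bullet> (E *v u)) * (w \<bullet> w)" using max[of w] by simp
    then show ?thesis using w(2) by simp
  qed
  moreover have "u \<bullet> (E *v u) \<in> Eig"
  proof -
    have "u \<noteq> 0" using u(2) by auto
    then show ?thesis using u(1,3) unfolding Eig_def by blast
  qed
  ultimately have "block_lambda_max blk b E = u \<bullet> (E *v u)"
    unfolding block_lambda_max_def Eig_def[symmetric] by (rule Max_eqI)
  then show ?thesis using max v by simp
qed simp

lemma block_scal_mult_nth: "(block_scal blk \<gamma> ** A) $ i $ j = \<gamma> (blk i) * A $ i $ j"
  by (simp add: matrix_matrix_mult_def block_scal_def if_distrib if_distribR cong: if_cong)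

lemma mult_block_scal_nth: "(A ** block_scal blk \<gamma>) $ i $ j = A $ i $ j * \<gamma> (blk j)"
  by (simp add: matrix_matrix_mult_def block_scal_def if_distrib if_distribR cong: if_cong)

lemma block_scal_mult_vec_nth: "(block_scal blk \<gamma> *v x) $ i = \<gamma> (blk i) * x $ i"
  by (simp add: matrix_vector_mult_def block_scal_def if_distrib if_distribR cong: if_cong)

lemma block_scal_mult_block_vec: "block_vec blk b v \<Longrightarrow> block_scal blk \<gamma> *v v = \<gamma> b *\<^sub>R v"
  by (auto simp: vec_eq_iff block_scal_mult_vec_nth block_vec_def)

lemma block_part_block_scal: "block_part blk b (block_scal blk \<gamma> *v x) = \<gamma> b *\<^sub>R block_part blk b x"
  by (auto simp: vec_eq_iff block_scal_mult_vec_nth block_part_def)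

lemma block_diag_block_scal: "block_diag blk (block_scal blk \<gamma>)"
  by (simp add: block_diag_def block_scal_def)

lemma block_scal_commute:
  assumes "block_diag blk A"
  shows "block_scal blk \<gamma> ** A = A ** block_scal blk \<gamma>"
  using assms unfolding block_diag_def
  by (auto simp: vec_eq_iff block_scal_mult_nth mult_block_scal_nth) metis

lemma block_scal_quadratic_le:
  fixes E :: "real^'n^'n" and blk :: "'n \<Rightarrow> 'b::finite"
  assumes sym: "sym_mat E" and bd: "block_diag blk E" and \<gamma>: "\<And>b. \<gamma> b > 0"
    and step: "\<And>b. \<gamma> b \<le> inverse (block_lambda_max blk b E)"
  shows "(block_scal blk \<gamma> *v v) \<bullet> (E *v (block_scal blk \<gamma> *v v)) \<le> (block_scal blk \<gamma> *v v) \<bullet> v"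
proof -
  let ?G = "block_scal blk \<gamma>"
  have blockwise: "\<gamma> b * \<gamma> b * (u \<bullet> (E *v u)) \<le> \<gamma> b * (u \<bullet> u)" if u: "block_vec blk b u" for b u
  proof -
    let ?l = "block_lambda_max blk b E"
    have "inverse ?l > 0" using \<gamma>[of b] step[of b] by linarith
    then have "\<gamma> b * ?l \<le> 1" using step[of b] by (simp add: field_simps)
    then have "(\<gamma> b * ?l) * (u \<bullet> u) \<le> 1 * (u \<bullet> u)" by (rule mult_right_mono) simp
    moreover have "\<gamma> b * (u \<bullet> (E *v u)) \<le> \<gamma> b * (?l * (u \<bullet> u))"
      using rayleigh_le_block_lambda_max[OF sym bd u] \<gamma>[of b] by (simp add: mult_left_mono)
    ultimately have "\<gamma> b * (u \<bullet> (E *v u)) \<le> u \<bullet> u" by (simp add: mult.assoc)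
    then show ?thesis using \<gamma>[of b] by (simp add: mult.assoc mult_left_mono)
  qed
  have "(?G *v v) \<bullet> (E *v (?G *v v))
      = (\<Sum>b\<in>UNIV. block_part blk b (?G *v v) \<bullet> (E *v block_part blk b (?G *v v)))"
    by (rule block_diag_inner_split[OF bd])
  also have "\<dots> = (\<Sum>b\<in>UNIV. \<gamma> b * \<gamma> b * (block_part blk b v \<bullet> (E *v block_part blk b v)))"
    by (simp add: block_part_block_scal matrix_vector_mult_scaleR mult.assoc)
  also have "\<dots> \<le> (\<Sum>b\<in>UNIV. \<gamma> b * (block_part blk b v \<bullet> block_part blk b v))"
    by (rule sum_mono) (rule blockwise[OF block_vec_block_part])
  also have "\<dots> = (\<Sum>b\<in>UNIV. block_part blk b v \<bullet> (?G *v block_part blk b v))"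
    by (simp add: block_scal_mult_block_vec[OF block_vec_block_part])
  also have "\<dots> = (?G *v v) \<bullet> v"
    by (simp add: block_diag_inner_split[OF block_diag_block_scal, symmetric] inner_commute)
  finally show ?thesis .
qed

lemma qnorm_sq_scaleR: "qnorm_sq (a *\<^sub>R D) v = a * qnorm_sq D v"
  unfolding qnorm_sq_def scaleR_matrix_vector_assoc[symmetric] by simp

lemma qnorm_sq_block_scal_nonneg:
  fixes blk :: "'n::finite \<Rightarrow> 'b::finite"
  assumes bd: "block_diag blk W" and pd: "\<And>b. block_pd blk b W" and \<gamma>: "\<And>b. \<gamma> b > 0"
  shows "0 \<le> qnorm_sq (block_scal blk \<gamma> ** W) g"
proof -
  have "qnorm_sq (block_scal blk \<gamma> ** W) g = g \<bullet> ((block_scal blk \<gamma> ** W) *v g)"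
    by (simp add: qnorm_sq_def inner_commute)
  also have "\<dots> = (\<Sum>b\<in>UNIV. block_part blk b g \<bullet> ((block_scal blk \<gamma> ** W) *v block_part blk b g))"
    by (rule block_diag_inner_split[OF block_diag_mult[OF block_diag_block_scal bd]])
  also have "\<dots> = (\<Sum>b\<in>UNIV. \<gamma> b * (block_part blk b g \<bullet> (W *v block_part blk b g)))"
    by (simp add: block_scal_mult_block_vec[OF block_vec_block_diag_mult[OF bd block_vec_block_part]]
        flip: matrix_vector_mul_assoc)
  also have "\<dots> \<ge> 0"
  proof (rule sum_nonneg)
    fix b
    have "0 \<le> block_part blk b g \<bullet> (W *v block_part blk b g)"
      using pd[of b] block_vec_block_part[of blk b g] unfolding block_pd_def
      by (cases "block_part blk b g = 0") (auto intro: less_imp_le)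
    then show "0 \<le> \<gamma> b * (block_part blk b g \<bullet> (W *v block_part blk b g))"
      using \<gamma>[of b] by simp
  qed
  finally show ?thesis .
qed

text \<open>Since \<open>\<Gamma>\<close> commutes with the block-diagonal \<open>W\<close> and \<open>s\<close>, the step \<open>\<Gamma> W s g\<close> equals \<open>W s \<Gamma> g\<close>.\<close>
lemma preconditioned_step_curvature:
  fixes blk :: "'n::finite \<Rightarrow> 'b::finite" and s W L :: "real^'n^'n"
  assumes s: "sym_mat s" "block_diag blk s" and W: "sym_mat W" "block_diag blk W"
  shows "(L *v ((block_scal blk \<gamma> ** W ** s) *v g)) \<bullet> ((block_scal blk \<gamma> ** W ** s) *v g)
       = (block_scal blk \<gamma> *v g) \<bullet> ((s ** W ** L ** W ** s) *v (block_scal blk \<gamma> *v g))"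
proof -
  let ?G = "block_scal blk \<gamma>"
  have "?G ** W ** s = W ** (?G ** s)" by (simp add: block_scal_commute[OF W(2)] matrix_mul_assoc)
  also have "\<dots> = (W ** s) ** ?G" by (simp add: block_scal_commute[OF s(2)] matrix_mul_assoc)
  finally have "(?G ** W ** s) *v g = (W ** s) *v (?G *v g)" by (simp add: matrix_vector_mul_assoc)
  then have "(L *v ((?G ** W ** s) *v g)) \<bullet> ((?G ** W ** s) *v g)
      = (?G *v g) \<bullet> ((transpose (W ** s) ** L ** (W ** s)) *v (?G *v g))"
    by (simp only: inner_matrix_vector_congruence)
  also have "transpose (W ** s) ** L ** (W ** s) = s ** W ** L ** W ** s"
    using s(1) W(1) by (simp add: sym_mat_def matrix_transpose_mul matrix_mul_assoc)
  finally show ?thesis .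
qed

section \<open>Matrix-valued random variables\<close>

lemma continuous_on_matrix_vector_mult_pair:
  "continuous_on UNIV (\<lambda>p :: (real^'n^'m) \<times> (real^'n). fst p *v snd p)"
  unfolding matrix_vector_mult_def by (intro continuous_on_vec_lambda continuous_intros)

lemma continuous_on_matrix_mult_pair:
  "continuous_on UNIV (\<lambda>p :: (real^'n^'m) \<times> (real^'k^'n). fst p ** snd p)"
  unfolding matrix_matrix_mult_def by (intro continuous_on_vec_lambda continuous_intros)

lemma borel_measurable_matrix_vector_mult[measurable (raw)]:
  fixes A :: "'a \<Rightarrow> real^'n^'m" and v :: "'a \<Rightarrow> real^'n"
  assumes "A \<in> borel_measurable M" "v \<in> borel_measurable M"
  shows "(\<lambda>\<omega>. A \<omega> *v v \<omega>) \<in> borel_measurable M"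
  using assms continuous_on_matrix_vector_mult_pair by (rule borel_measurable_continuous_Pair)

lemma borel_measurable_matrix_mult[measurable (raw)]:
  fixes A :: "'a \<Rightarrow> real^'n^'m" and B :: "'a \<Rightarrow> real^'k^'n"
  assumes "A \<in> borel_measurable M" "B \<in> borel_measurable M"
  shows "(\<lambda>\<omega>. A \<omega> ** B \<omega>) \<in> borel_measurable M"
  using assms continuous_on_matrix_mult_pair by (rule borel_measurable_continuous_Pair)

lemma
  fixes T :: "'b::euclidean_space \<Rightarrow> 'c::euclidean_space"
  assumes "linear T" "integrable M X"
  shows integrable_linear_map: "integrable M (\<lambda>\<omega>. T (X \<omega>))"
    and integral_linear_map: "integral\<^sup>L M (\<lambda>\<omega>. T (X \<omega>)) = T (integral\<^sup>L M X)"
  using assms linear_conv_bounded_linear integrable_bounded_linear integral_bounded_linear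
  by blast+

lemma integral_matrix_nth:
  fixes X :: "'a \<Rightarrow> real^'n^'m"
  assumes "integrable M X"
  shows "(integral\<^sup>L M X) $ i $ j = integral\<^sup>L M (\<lambda>\<omega>. X \<omega> $ i $ j)"
proof -
  have "linear (\<lambda>A :: real^'n^'m. A $ i $ j)" by (intro linearI) auto
  from integral_linear_map[OF this assms] show ?thesis by simp
qed

lemma block_diag_integral:
  fixes X :: "'a \<Rightarrow> real^'n^'n"
  assumes "integrable M X" "\<And>\<omega>. \<omega> \<in> space M \<Longrightarrow> block_diag blk (X \<omega>)"
  shows "block_diag blk (integral\<^sup>L M X)"
  using assms(2) unfolding block_diag_def
  by (auto simp: integral_matrix_nth[OF assms(1)] intro: integral_eq_zero_AE)

lemma sym_mat_integral:
  fixes X :: "'a \<Rightarrow> real^'n^'n"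
  assumes "integrable M X" "\<And>\<omega>. \<omega> \<in> space M \<Longrightarrow> sym_mat (X \<omega>)"
  shows "sym_mat (integral\<^sup>L M X)"
  using assms(2) unfolding sym_mat_def vec_eq_iff
  by (auto simp: integral_matrix_nth[OF assms(1)] transpose_def intro!: Bochner_Integration.integral_cong)

text \<open>The gradient is a pointwise limit of difference quotients of the continuous \<open>f\<close>.\<close>
lemma has_derivative_borel_measurable:
  fixes f :: "'a::euclidean_space \<Rightarrow> real"
  assumes der: "\<And>y. (f has_derivative (\<lambda>h. grad y \<bullet> h)) (at y)"
  shows "f \<in> borel_measurable borel" and "grad \<in> borel_measurable borel"
proof -
  have cont: "continuous_on UNIV f"
    by (rule continuous_at_imp_continuous_on) (use der has_derivative_continuous in blast)
  then show "f \<in> borel_measurable borel" by (rule borel_measurable_continuous_onI)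
  show "grad \<in> borel_measurable borel"
    unfolding borel_measurable_euclidean_space[where f=grad]
  proof
    fix e :: 'a
    define q where "q m y = (f (y + inverse (real (Suc m)) *\<^sub>R e) - f y) / inverse (real (Suc m))" for m y
    show "(\<lambda>y. grad y \<bullet> e) \<in> borel_measurable borel"
    proof (rule borel_measurable_LIMSEQ_real[where u=q])
      fix m
      have "(\<lambda>y. f (y + inverse (real (Suc m)) *\<^sub>R e)) \<in> borel_measurable borel"
        by (intro borel_measurable_continuous_on[OF cont]) simp
      then show "q m \<in> borel_measurable borel"
        unfolding q_def using borel_measurable_continuous_onI[OF cont] by measurable
    next
      fix y
      have "((\<lambda>t::real. y + t *\<^sub>R e) has_derivative (\<lambda>t. t *\<^sub>R e)) (at 0)"
        by (intro derivative_eq_intros) auto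
      from has_derivative_compose[OF this der[of "y + 0 *\<^sub>R e"]]
      have "((\<lambda>t. f (y + t *\<^sub>R e)) has_real_derivative (grad y \<bullet> e)) (at 0)"
        by (simp add: has_field_derivative_def mult_commute_abs)
      then have "((\<lambda>h. (f (y + h *\<^sub>R e) - f y) / h) \<longlongrightarrow> grad y \<bullet> e) (at 0)"
        unfolding DERIV_def by simp
      from tendsto_at_iff_sequentially[THEN iffD1, OF this, rule_format, of "\<lambda>m. inverse (real (Suc m))"]
      show "(\<lambda>m. q m y) \<longlonglongrightarrow> grad y \<bullet> e"
        using LIMSEQ_inverse_real_of_nat by (simp add: q_def comp_def)
    qed
  qed
qed

section \<open>Stochastic iterations with independent noise\<close>

lemma (in prob_space) nn_integral_indep_var:
  assumes indep: "indep_var N X N' Y" and h: "h \<in> borel_measurable (N \<Otimes>\<^sub>M N')"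
  shows "(\<integral>\<^sup>+\<omega>. h (X \<omega>, Y \<omega>) \<partial>M) = (\<integral>\<^sup>+\<omega>. (\<integral>\<^sup>+\<omega>'. h (X \<omega>, Y \<omega>') \<partial>M) \<partial>M)"
proof -
  have X: "random_variable N X" and Y: "random_variable N' Y"
    and prod: "distr M N X \<Otimes>\<^sub>M distr M N' Y = distr M (N \<Otimes>\<^sub>M N') (\<lambda>\<omega>. (X \<omega>, Y \<omega>))"
    using indep unfolding indep_var_distribution_eq by auto
  interpret Y: prob_space "distr M N' Y" by (rule prob_space_distr[OF Y])
  have h': "h \<in> borel_measurable (distr M N X \<Otimes>\<^sub>M distr M N' Y)"
    and h'': "h \<in> borel_measurable (N \<Otimes>\<^sub>M distr M N' Y)"
    using h by (simp_all cong: measurable_cong_sets)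
  have inner: "(\<integral>\<^sup>+y. h (x, y) \<partial>distr M N' Y) = (\<integral>\<^sup>+\<omega>'. h (x, Y \<omega>') \<partial>M)" if "x \<in> space N" for x
    using measurable_Pair2[OF h that] by (simp add: nn_integral_distr[OF Y])
  have "(\<integral>\<^sup>+\<omega>. h (X \<omega>, Y \<omega>) \<partial>M) = (\<integral>\<^sup>+z. h z \<partial>distr M (N \<Otimes>\<^sub>M N') (\<lambda>\<omega>. (X \<omega>, Y \<omega>)))"
    using measurable_Pair[OF X Y] h by (simp add: nn_integral_distr)
  also have "\<dots> = (\<integral>\<^sup>+x. \<integral>\<^sup>+y. h (x, y) \<partial>distr M N' Y \<partial>distr M N X)"
    unfolding prod[symmetric] by (rule Y.nn_integral_fst[OF h', symmetric])
  also have "\<dots> = (\<integral>\<^sup>+\<omega>. \<integral>\<^sup>+y. h (X \<omega>, y) \<partial>distr M N' Y \<partial>M)"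
    using Y.borel_measurable_nn_integral_fst[OF h''] X by (simp add: nn_integral_distr)
  also have "\<dots> = (\<integral>\<^sup>+\<omega>. \<integral>\<^sup>+\<omega>'. h (X \<omega>, Y \<omega>') \<partial>M \<partial>M)"
    using X by (intro nn_integral_cong) (simp add: inner measurable_space)
  finally show ?thesis .
qed

primrec random_iterate :: "('x \<Rightarrow> 's \<Rightarrow> 'x) \<Rightarrow> 'x \<Rightarrow> nat \<Rightarrow> (nat \<Rightarrow> 's) \<Rightarrow> 'x" where
  "random_iterate \<Phi> x0 0 r = x0"
| "random_iterate \<Phi> x0 (Suc k) r = \<Phi> (random_iterate \<Phi> x0 k r) (r k)"

lemma random_iterate_cong:
  "(\<And>i. i < k \<Longrightarrow> r i = r' i) \<Longrightarrow> random_iterate \<Phi> x0 k r = random_iterate \<Phi> x0 k r'"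
  by (induction k) auto

lemma measurable_random_iterate:
  assumes \<Phi>: "(\<lambda>p. \<Phi> (fst p) (snd p)) \<in> measurable (N \<Otimes>\<^sub>M S) N" and x0: "x0 \<in> space N"
  shows "{..<k} \<subseteq> J \<Longrightarrow> (\<lambda>r. random_iterate \<Phi> x0 k r) \<in> measurable (PiM J (\<lambda>_. S)) N"
proof (induction k)
  case (Suc k)
  from Suc.prems have "{..<k} \<subseteq> J" "k \<in> J" by auto
  then have "(\<lambda>r. (random_iterate \<Phi> x0 k r, r k)) \<in> measurable (PiM J (\<lambda>_. S)) (N \<Otimes>\<^sub>M S)"
    by (intro measurable_Pair measurable_component_singleton Suc.IH)
  from measurable_compose[OF this \<Phi>] show ?case by simp
next
  case 0
  have "random_iterate \<Phi> x0 0 = (\<lambda>_. x0)" by (simp add: fun_eq_iff)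
  then show ?case using x0 by simp
qed

locale indep_descent = prob_space +
  fixes S :: "nat \<Rightarrow> 'a \<Rightarrow> 's::topological_space"
    and \<Phi> :: "'x::topological_space \<Rightarrow> 's \<Rightarrow> 'x" and x0 :: 'x and x :: "nat \<Rightarrow> 'a \<Rightarrow> 'x"
    and F Q :: "'x \<Rightarrow> real"
  assumes indep: "indep_vars (\<lambda>_. borel) S UNIV"
    and \<Phi>_measurable: "(\<lambda>p. \<Phi> (fst p) (snd p)) \<in> measurable (borel \<Otimes>\<^sub>M borel) borel"
    and x_0: "\<And>\<omega>. x 0 \<omega> = x0"
    and x_Suc: "\<And>k \<omega>. x (Suc k) \<omega> = \<Phi> (x k \<omega>) (S k \<omega>)"
    and F_measurable: "F \<in> borel_measurable borel" and F_nonneg: "\<And>y. 0 \<le> F y"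
    and F_integrable: "\<And>k. integrable M (\<lambda>\<omega>. F (x k \<omega>))"
    and Q_measurable: "Q \<in> borel_measurable borel" and Q_nonneg: "\<And>y. 0 \<le> Q y"
    and step_integrable: "\<And>k y. integrable M (\<lambda>\<omega>. F (\<Phi> y (S k \<omega>)))"
    and step_descent: "\<And>k y. expectation (\<lambda>\<omega>. F (\<Phi> y (S k \<omega>))) \<le> F y - Q y / 2"
begin

lemma x_eq_random_iterate: "x k \<omega> = random_iterate \<Phi> x0 k (\<lambda>i. S i \<omega>)"
  by (induction k) (simp_all add: x_0 x_Suc)

lemma Q_le_F: "Q y \<le> 2 * F y"
proof -
  have "0 \<le> expectation (\<lambda>\<omega>. F (\<Phi> y (S 0 \<omega>)))" by (rule integral_nonneg_AE) (simp add: F_nonneg)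
  then show ?thesis using step_descent[where k=0 and y=y] by simp
qed

lemma nn_integral_step_le: "(\<integral>\<^sup>+\<omega>. F (\<Phi> y (S k \<omega>)) \<partial>M) \<le> ennreal (F y - Q y / 2)"
  using step_descent[where k=k and y=y] F_nonneg
  by (simp add: nn_integral_eq_integral[OF step_integrable] ennreal_leI)

lemma S_measurable: "S k \<in> borel_measurable M"
  using indep unfolding indep_vars_def by blast

lemma x_measurable: "x k \<in> borel_measurable M"
proof -
  have "(\<lambda>\<omega>. \<lambda>i\<in>{..<k}. S i \<omega>) \<in> measurable M (PiM {..<k} (\<lambda>_. borel))"
    by (rule measurable_restrict) (rule S_measurable)
  moreover have "(\<lambda>r. random_iterate \<Phi> x0 k r) \<in> measurable (PiM {..<k} (\<lambda>_. borel)) borel"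
    by (rule measurable_random_iterate[OF \<Phi>_measurable]) simp_all
  ultimately have "(\<lambda>\<omega>. random_iterate \<Phi> x0 k (\<lambda>i\<in>{..<k}. S i \<omega>)) \<in> borel_measurable M"
    by (rule measurable_compose)
  moreover have "(\<lambda>\<omega>. random_iterate \<Phi> x0 k (\<lambda>i\<in>{..<k}. S i \<omega>)) = x k"
    unfolding x_eq_random_iterate by (intro ext random_iterate_cong) simp
  ultimately show ?thesis by simp
qed

lemma Q_integrable: "integrable M (\<lambda>\<omega>. Q (x k \<omega>))"
proof (rule Bochner_Integration.integrable_bound[OF _ _ AE_I2])
  show "integrable M (\<lambda>\<omega>. 2 * F (x k \<omega>))" using F_integrable by simp
  show "(\<lambda>\<omega>. Q (x k \<omega>)) \<in> borel_measurable M"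
    using measurable_compose[OF x_measurable Q_measurable] by (simp add: comp_def)
qed (simp add: Q_le_F Q_nonneg F_nonneg)

text \<open>Conditioning on \<open>S\<^sub>0, \<dots>, S\<^sub>k\<^sub>-\<^sub>1\<close>, which determine \<open>x\<^sub>k\<close> and are independent of \<open>S\<^sub>k\<close>.\<close>
lemma expectation_step:
  "expectation (\<lambda>\<omega>. F (x (Suc k) \<omega>)) \<le> expectation (\<lambda>\<omega>. F (x k \<omega>)) - expectation (\<lambda>\<omega>. Q (x k \<omega>)) / 2"
proof -
  let ?past = "\<lambda>\<omega>. \<lambda>i\<in>{..<k}. S i \<omega>" and ?now = "\<lambda>\<omega>. \<lambda>i\<in>{k}. S i \<omega>"
  define h where "h p = ennreal (F (\<Phi> (random_iterate \<Phi> x0 k (fst p)) (snd p k)))" for p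
  have h_measurable: "h \<in> borel_measurable (PiM {..<k} (\<lambda>_. borel) \<Otimes>\<^sub>M PiM {k} (\<lambda>_. borel))"
  proof -
    have "(\<lambda>p. (random_iterate \<Phi> x0 k (fst p), snd p k))
        \<in> measurable (PiM {..<k} (\<lambda>_. borel) \<Otimes>\<^sub>M PiM {k} (\<lambda>_. borel)) (borel \<Otimes>\<^sub>M borel)"
      by (intro measurable_Pair measurable_compose[OF measurable_fst]
          measurable_compose[OF measurable_snd] measurable_random_iterate[OF \<Phi>_measurable]
          measurable_component_singleton) auto
    from measurable_compose[OF measurable_compose[OF this \<Phi>_measurable] F_measurable]
    show ?thesis unfolding h_def by simp
  qed
  have "random_iterate \<Phi> x0 k (?past \<omega>) = x k \<omega>" for \<omega>
    unfolding x_eq_random_iterate by (rule random_iterate_cong) simp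
  then have h_past_now: "h (?past \<omega>, ?now \<omega>') = ennreal (F (\<Phi> (x k \<omega>) (S k \<omega>')))" for \<omega> \<omega>'
    by (simp add: h_def)
  define G where "G \<omega> = F (x k \<omega>) - Q (x k \<omega>) / 2" for \<omega>
  have G_integrable: "integrable M G" unfolding G_def using F_integrable Q_integrable by simp
  have G_nonneg: "0 \<le> G \<omega>" for \<omega> using Q_le_F[of "x k \<omega>"] by (simp add: G_def)
  have "ennreal (expectation (\<lambda>\<omega>. F (x (Suc k) \<omega>))) = (\<integral>\<^sup>+\<omega>. F (x (Suc k) \<omega>) \<partial>M)"
    by (rule nn_integral_eq_integral[OF F_integrable, symmetric]) (simp add: F_nonneg)
  also have "\<dots> = (\<integral>\<^sup>+\<omega>. h (?past \<omega>, ?now \<omega>) \<partial>M)"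
    by (simp add: h_past_now x_Suc)
  also have "\<dots> = (\<integral>\<^sup>+\<omega>. \<integral>\<^sup>+\<omega>'. h (?past \<omega>, ?now \<omega>') \<partial>M \<partial>M)"
    by (rule nn_integral_indep_var[OF indep_var_restrict[OF indep] h_measurable]) auto
  also have "\<dots> \<le> (\<integral>\<^sup>+\<omega>. G \<omega> \<partial>M)"
    unfolding h_past_now G_def by (intro nn_integral_mono nn_integral_step_le)
  also have "\<dots> = ennreal (expectation G)"
    by (intro nn_integral_eq_integral[OF G_integrable] AE_I2 G_nonneg)
  finally have "ennreal (expectation (\<lambda>\<omega>. F (x (Suc k) \<omega>))) \<le> ennreal (expectation G)" .
  moreover have "0 \<le> expectation G" by (rule integral_nonneg_AE) (simp add: G_nonneg)
  ultimately have "expectation (\<lambda>\<omega>. F (x (Suc k) \<omega>)) \<le> expectation G" by simp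
  then show ?thesis unfolding G_def using F_integrable Q_integrable by simp
qed

lemma sum_expectation_le: "(\<Sum>k<K. expectation (\<lambda>\<omega>. Q (x k \<omega>))) \<le> 2 * F x0"
proof -
  have "(\<Sum>k<K. expectation (\<lambda>\<omega>. Q (x k \<omega>)))
      \<le> 2 * (expectation (\<lambda>\<omega>. F (x 0 \<omega>)) - expectation (\<lambda>\<omega>. F (x K \<omega>)))"
  proof (induction K)
    case (Suc K)
    then show ?case using expectation_step[of K] by simp
  qed simp
  moreover have "expectation (\<lambda>\<omega>. F (x K \<omega>)) \<ge> 0" by (simp add: F_nonneg integral_nonneg_AE)
  ultimately show ?thesis by (simp add: x_0 prob_space)
qed

end

section \<open>One step of the preconditioned sketched gradient method\<close>

lemma (in prob_space) expectation_first_order_term: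
  fixes S :: "'a \<Rightarrow> real^'n^'n"
  assumes "integrable M S" "expectation S = mat 1"
  shows "integrable M (\<lambda>\<omega>. g \<bullet> ((D ** S \<omega>) *v g))"
    and "expectation (\<lambda>\<omega>. g \<bullet> ((D ** S \<omega>) *v g)) = qnorm_sq D g"
proof -
  have lin: "linear (\<lambda>A :: real^'n^'n. g \<bullet> ((D ** A) *v g))"
    by (intro linearI) (simp_all add: matrix_add_ldistrib matrix_vector_mult_add_rdistrib
        inner_add_right matrix_scalar_ac scalar_matrix_assoc[symmetric]
        scaleR_matrix_vector_assoc[symmetric])
  show "integrable M (\<lambda>\<omega>. g \<bullet> ((D ** S \<omega>) *v g))" by (rule integrable_linear_map[OF lin assms(1)])
  show "expectation (\<lambda>\<omega>. g \<bullet> ((D ** S \<omega>) *v g)) = qnorm_sq D g"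
    by (simp add: integral_linear_map[OF lin assms(1)] assms(2) qnorm_sq_def inner_commute)
qed

text \<open>With \<open>R = W\<^sup>1\<^sup>/\<^sup>2\<close> one has \<open>S W L W S = R Y R\<close>, and the stepsize rule gives
  \<open>\<Gamma> E[Y] \<Gamma> \<le> \<Gamma>\<close> blockwise.\<close>
lemma (in prob_space) expectation_curvature_term_le:
  fixes blk :: "'n::finite \<Rightarrow> 'b::finite" and S :: "'a \<Rightarrow> real^'n^'n" and W L :: "real^'n^'n"
  defines "Y \<equiv> \<lambda>\<omega>. psd_sqrt (matrix_inv W) ** S \<omega> ** W ** L ** W ** S \<omega> ** psd_sqrt (matrix_inv W)"
  assumes W: "sym_mat W" "block_diag blk W" "\<And>b. block_pd blk b W"
    and L: "sym_mat L" "block_diag blk L"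
    and S: "\<And>\<omega>. \<omega> \<in> space M \<Longrightarrow> sym_mat (S \<omega>)" "\<And>\<omega>. \<omega> \<in> space M \<Longrightarrow> block_diag blk (S \<omega>)"
    and \<gamma>: "\<And>b. \<gamma> b > 0"
    and Y_integrable: "integrable M Y"
    and step: "\<And>b. \<gamma> b \<le> inverse (block_lambda_max blk b (expectation Y))"
  shows "integrable M (\<lambda>\<omega>. (block_scal blk \<gamma> *v g) \<bullet> ((S \<omega> ** W ** L ** W ** S \<omega>) *v (block_scal blk \<gamma> *v g)))"
    and "expectation (\<lambda>\<omega>. (block_scal blk \<gamma> *v g) \<bullet> ((S \<omega> ** W ** L ** W ** S \<omega>) *v (block_scal blk \<gamma> *v g)))
      \<le> qnorm_sq (block_scal blk \<gamma> ** W) g"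
proof -
  let ?G = "block_scal blk \<gamma>" and ?Ri = "psd_sqrt (matrix_inv W)"
  obtain R where R: "sym_mat R" "block_diag blk R" "R ** R = W" "?Ri ** R = mat 1" "R ** ?Ri = mat 1"
    and Ri: "sym_mat ?Ri" "block_diag blk ?Ri"
    using obtain_block_pd_sqrt[OF W] by blast
  have Ri_cancel: "A ** ?Ri ** R = A" for A by (metis R(4) matrix_mul_assoc matrix_mul_rid)
  have Y_sandwich: "S \<omega> ** W ** L ** W ** S \<omega> = R ** Y \<omega> ** R" for \<omega>
    by (simp add: Y_def matrix_mul_assoc R(5) Ri_cancel)
  define w where "w = R *v (?G *v g)"
  have lin: "linear (\<lambda>A :: real^'n^'n. w \<bullet> (A *v w))"
    by (intro linearI) (simp_all add: matrix_vector_mult_add_rdistrib inner_add_right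
        scaleR_matrix_vector_assoc[symmetric])
  have integrand: "(\<lambda>\<omega>. (?G *v g) \<bullet> ((S \<omega> ** W ** L ** W ** S \<omega>) *v (?G *v g)))
      = (\<lambda>\<omega>. w \<bullet> (Y \<omega> *v w))"
    by (simp add: Y_sandwich w_def sym_mat_inner_commute[OF R(1)] flip: matrix_vector_mul_assoc)
  show "integrable M (\<lambda>\<omega>. (?G *v g) \<bullet> ((S \<omega> ** W ** L ** W ** S \<omega>) *v (?G *v g)))"
    unfolding integrand by (rule integrable_linear_map[OF lin Y_integrable])
  have "sym_mat (Y \<omega>)" if "\<omega> \<in> space M" for \<omega>
    using S(1)[OF that] Ri(1) W(1) L(1) by (simp add: Y_def sym_mat_def matrix_transpose_mul matrix_mul_assoc)
  moreover have "block_diag blk (Y \<omega>)" if "\<omega> \<in> space M" for \<omega>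
    using S(2)[OF that] Ri(2) W(2) L(2) by (simp add: Y_def block_diag_mult)
  ultimately have EY: "sym_mat (expectation Y)" "block_diag blk (expectation Y)"
    by (simp_all add: sym_mat_integral[OF Y_integrable] block_diag_integral[OF Y_integrable])
  have w: "w = ?G *v (R *v g)"
    by (simp add: w_def matrix_vector_mul_assoc block_scal_commute[OF R(2)])
  have "expectation (\<lambda>\<omega>. (?G *v g) \<bullet> ((S \<omega> ** W ** L ** W ** S \<omega>) *v (?G *v g)))
      = w \<bullet> (expectation Y *v w)"
    unfolding integrand by (rule integral_linear_map[OF lin Y_integrable])
  also have "\<dots> \<le> w \<bullet> (R *v g)"
    unfolding w by (rule block_scal_quadratic_le[OF EY \<gamma> step])
  also have "\<dots> = qnorm_sq (?G ** W) g"
  proof -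
    have "R ** (R ** ?G) = ?G ** W"
      by (simp add: matrix_mul_assoc R(3) block_scal_commute[OF W(2)])
    then show ?thesis
      by (simp add: w_def qnorm_sq_def sym_mat_inner_commute[OF R(1)] inner_commute
          matrix_vector_mul_assoc)
  qed
  finally show "expectation (\<lambda>\<omega>. (?G *v g) \<bullet> ((S \<omega> ** W ** L ** W ** S \<omega>) *v (?G *v g)))
      \<le> qnorm_sq (?G ** W) g" .
qed

lemma (in prob_space) expected_preconditioned_descent:
  fixes f :: "real^'n \<Rightarrow> real" and blk :: "'n \<Rightarrow> 'b::finite" and S :: "'a \<Rightarrow> real^'n^'n"
    and W L :: "real^'n^'n" and \<gamma> :: "'b \<Rightarrow> real"
  defines "D \<equiv> block_scal blk \<gamma> ** W"
  assumes f: "f \<in> borel_measurable borel"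
    and smooth: "\<And>u. f u \<le> f y + g \<bullet> (u - y) + 1/2 * ((L *v (u - y)) \<bullet> (u - y))"
    and lower: "\<And>u. finf \<le> f u"
    and W: "sym_mat W" "block_diag blk W" "\<And>b. block_pd blk b W"
    and L: "sym_mat L" "block_diag blk L"
    and S: "S \<in> borel_measurable M" "integrable M S" "expectation S = mat 1"
      "\<And>\<omega>. \<omega> \<in> space M \<Longrightarrow> sym_mat (S \<omega>)" "\<And>\<omega>. \<omega> \<in> space M \<Longrightarrow> block_diag blk (S \<omega>)"
    and \<gamma>: "\<And>b. \<gamma> b > 0"
    and Y_integrable: "integrable M (\<lambda>\<omega>. psd_sqrt (matrix_inv W) ** S \<omega> ** W ** L ** W ** S \<omega>
      ** psd_sqrt (matrix_inv W))"
    and step: "\<And>b. \<gamma> b \<le> inverse (block_lambda_max blk b (expectation (\<lambda>\<omega>.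
      psd_sqrt (matrix_inv W) ** S \<omega> ** W ** L ** W ** S \<omega> ** psd_sqrt (matrix_inv W))))"
  shows "integrable M (\<lambda>\<omega>. f (y - (D ** S \<omega>) *v g))"
    and "expectation (\<lambda>\<omega>. f (y - (D ** S \<omega>) *v g)) \<le> f y - qnorm_sq D g / 2"
proof -
  let ?G = "block_scal blk \<gamma>"
  define A where "A \<omega> = g \<bullet> ((D ** S \<omega>) *v g)" for \<omega>
  define B where "B \<omega> = (?G *v g) \<bullet> ((S \<omega> ** W ** L ** W ** S \<omega>) *v (?G *v g))" for \<omega>
  define R where "R \<omega> = f y - A \<omega> + B \<omega> / 2" for \<omega>
  note A = expectation_first_order_term[OF S(2,3), of g D, folded A_def]
  note B = expectation_curvature_term_le[OF W L S(4,5) \<gamma> Y_integrable step, of g, folded B_def]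
  have R_integrable: "integrable M R" unfolding R_def using A(1) B(1) by simp
  have bound: "f (y - (D ** S \<omega>) *v g) \<le> R \<omega>" if "\<omega> \<in> space M" for \<omega>
  proof -
    let ?z = "(D ** S \<omega>) *v g"
    have "(L *v ?z) \<bullet> ?z = B \<omega>"
      unfolding B_def D_def by (rule preconditioned_step_curvature[OF S(4,5)[OF that] W(1,2)])
    then show ?thesis
      using smooth[of "y - ?z"] by (simp add: R_def A_def linear_neg[OF matrix_vector_mul_linear])
  qed
  have measurable: "(\<lambda>\<omega>. f (y - (D ** S \<omega>) *v g)) \<in> borel_measurable M"
    using f S(1) by measurable
  show integrable: "integrable M (\<lambda>\<omega>. f (y - (D ** S \<omega>) *v g))"
  proof (rule Bochner_Integration.integrable_bound[OF _ measurable])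
    show "integrable M (\<lambda>\<omega>. \<bar>R \<omega>\<bar> + \<bar>finf\<bar>)" using R_integrable by simp
    show "AE \<omega> in M. norm (f (y - (D ** S \<omega>) *v g)) \<le> norm (\<bar>R \<omega>\<bar> + \<bar>finf\<bar>)"
    proof (rule AE_I2)
      fix \<omega> assume "\<omega> \<in> space M"
      then have "finf \<le> f (y - (D ** S \<omega>) *v g)" "f (y - (D ** S \<omega>) *v g) \<le> R \<omega>"
        using bound lower by auto
      then show "norm (f (y - (D ** S \<omega>) *v g)) \<le> norm (\<bar>R \<omega>\<bar> + \<bar>finf\<bar>)"
        unfolding real_norm_def by arith
    qed
  qed
  have "expectation (\<lambda>\<omega>. f (y - (D ** S \<omega>) *v g)) \<le> expectation R"
    using bound by (intro integral_mono_AE integrable R_integrable AE_I2)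
  also have "\<dots> = f y - qnorm_sq D g + expectation B / 2"
    unfolding R_def using A B(1) by (simp add: prob_space)
  also have "\<dots> \<le> f y - qnorm_sq D g / 2" using B(2) by (simp add: D_def)
  finally show "expectation (\<lambda>\<omega>. f (y - (D ** S \<omega>) *v g)) \<le> f y - qnorm_sq D g / 2" .
qed

theorem theorem2:
  fixes f :: "real^'n \<Rightarrow> real" and grad :: "real^'n \<Rightarrow> real^'n"
    and finf :: real and blk :: "'n \<Rightarrow> 'b::finite"
    and L W :: "real^'n^'n" and \<gamma> :: "'b \<Rightarrow> real"
    and M :: "'a measure" and S :: "nat \<Rightarrow> 'a \<Rightarrow> real^'n^'n"
    and x0 :: "real^'n" and x :: "nat \<Rightarrow> 'a \<Rightarrow> real^'n" and K :: nat
  assumes blocks_nonempty: "surj blk"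
    and grad: "\<And>y. (f has_derivative (\<lambda>h. grad y \<bullet> h)) (at y)"
    and lower: "\<And>y. f y \<ge> finf"
    and smooth: "\<And>u y. f u \<le> f y + grad y \<bullet> (u - y) + 1/2 * ((L *v (u - y)) \<bullet> (u - y))"
    and L_sym: "sym_mat L" and L_blk: "block_diag blk L" and L_pd: "\<And>b. block_pd blk b L"
    and prob: "prob_space M"
    and S_meas: "\<And>k. S k \<in> borel_measurable M"
    and S_indep: "prob_space.indep_vars M (\<lambda>_. borel) S UNIV"
    and S_ident: "\<And>k. distr M borel (S k) = distr M borel (S 0)"
    and S_sym: "\<And>k \<omega>. \<omega> \<in> space M \<Longrightarrow> sym_mat (S k \<omega>)"
    and S_blk: "\<And>k \<omega>. \<omega> \<in> space M \<Longrightarrow> block_diag blk (S k \<omega>)"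
    and S_psd: "\<And>k b \<omega>. \<omega> \<in> space M \<Longrightarrow> block_psd blk b (S k \<omega>)"
    and S_int: "\<And>k. integrable M (S k)"
    and S_mean: "\<And>k. prob_space.expectation M (S k) = mat 1"
    and W_sym: "sym_mat W" and W_blk: "block_diag blk W" and W_pd: "\<And>b. block_pd blk b W"
    and gamma_pos: "\<And>b. \<gamma> b > 0"
    and SWLWS_int: "\<And>k. integrable M (\<lambda>\<omega>. psd_sqrt (matrix_inv W) ** S k \<omega> ** W ** L ** W
                                              ** S k \<omega> ** psd_sqrt (matrix_inv W))"
    and stepsize: "\<And>k b. \<gamma> b \<le> inverse (block_lambda_max blk b
         (prob_space.expectation M (\<lambda>\<omega>. psd_sqrt (matrix_inv W) ** S k \<omega> ** W ** L ** W
                                              ** S k \<omega> ** psd_sqrt (matrix_inv W))))"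
    and x_0: "\<And>\<omega>. x 0 \<omega> = x0"
    and x_Suc: "\<And>k \<omega>. x (Suc k) \<omega> = x k \<omega> - ((block_scal blk \<gamma> ** W) ** S k \<omega>) *v grad (x k \<omega>)"
    and f_int: "\<And>k. integrable M (\<lambda>\<omega>. f (x k \<omega>))"
    and norm_int: "\<And>k. integrable M (\<lambda>\<omega>. qnorm_sq
         ((1 / det (block_scal blk \<gamma> ** W) powr (1 / real CARD('n))) *\<^sub>R (block_scal blk \<gamma> ** W))
         (grad (x k \<omega>)))"
    and K: "K \<ge> 1"
  shows "1 / real K * (\<Sum>k<K. prob_space.expectation M (\<lambda>\<omega>. qnorm_sq
         ((1 / det (block_scal blk \<gamma> ** W) powr (1 / real CARD('n))) *\<^sub>R (block_scal blk \<gamma> ** W))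
         (grad (x k \<omega>))))
       \<le> 2 * (f x0 - finf) / (det (block_scal blk \<gamma> ** W) powr (1 / real CARD('n)) * real K)"
proof -
  \<comment> \<open>Not needed: \<open>blocks_nonempty\<close>, \<open>L_pd\<close>, \<open>S_psd\<close>, \<open>S_ident\<close> (the stepsize rule is assumed
    for every \<open>k\<close>), \<open>norm_int\<close> (integrability follows from the descent bound) and \<open>K\<close>.\<close>
  interpret prob_space M by (rule prob)
  define D where "D = block_scal blk \<gamma> ** W"
  define c where "c = det D powr (1 / real CARD('n))"
  note f_grad_measurable[measurable] = has_derivative_borel_measurable[OF grad]
  note descent = expected_preconditioned_descent[OF f_grad_measurable(1) smooth lower W_sym W_blk W_pd
      L_sym L_blk S_meas S_int S_mean S_sym S_blk gamma_pos SWLWS_int stepsize]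
  interpret indep_descent M S "\<lambda>y s. y - (D ** s) *v grad y" x0 x "\<lambda>y. f y - finf"
    "\<lambda>y. qnorm_sq D (grad y)"
  proof unfold_locales
    show "(\<lambda>p. fst p - (D ** snd p) *v grad (fst p)) \<in> borel \<Otimes>\<^sub>M borel \<rightarrow>\<^sub>M borel"
      by measurable
    show "(\<lambda>y. qnorm_sq D (grad y)) \<in> borel_measurable borel"
      unfolding qnorm_sq_def by measurable
    show "0 \<le> qnorm_sq D (grad y)" for y
      unfolding D_def by (rule qnorm_sq_block_scal_nonneg[OF W_blk W_pd gamma_pos])
    show "integrable M (\<lambda>\<omega>. f (y - (D ** S k \<omega>) *v grad y) - finf)" for k y
      using descent(1) by (simp add: D_def)
    show "expectation (\<lambda>\<omega>. f (y - (D ** S k \<omega>) *v grad y) - finf)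
        \<le> f y - finf - qnorm_sq D (grad y) / 2" for k y
      using descent by (simp add: D_def prob_space)
  qed (use S_indep x_0 x_Suc f_int lower in \<open>simp_all add: D_def\<close>)
  have "1 / real K * (\<Sum>k<K. expectation (\<lambda>\<omega>. qnorm_sq ((1 / c) *\<^sub>R D) (grad (x k \<omega>))))
      = 1 / (c * real K) * (\<Sum>k<K. expectation (\<lambda>\<omega>. qnorm_sq D (grad (x k \<omega>))))"
    by (simp add: qnorm_sq_scaleR sum_distrib_left mult_ac)
  also have "\<dots> \<le> 1 / (c * real K) * (2 * (f x0 - finf))"
    using sum_expectation_le[of K] by (intro mult_left_mono) (simp_all add: c_def)
  finally show ?thesis by (simp add: c_def D_def)
qed

end
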